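(* Let $X$ be a connected, locally path connected space and $H\le\pi_1(X,x_0)$. Then $X$ is semilocally path $H$-connected if and only if $H$ is an open subgroup of $\pi_1^{qtop}(X,x_0)$.
   Context: $X$ is semilocally path $H$-connected if for every path $\alpha$ starting at $x_0$ there is an open neighborhood $U_\alpha$ of $\alpha(1)$ with $i_*\pi_1(U_\alpha,\alpha(1))\le[\alpha^{-1}H\alpha]$, where $[\alpha^{-1}H\alpha]=\{[\alpha^{-1}*\gamma*\alpha]:[\gamma]\in H\}\le\pi_1(X,\alpha(1))$ and $i$ is inclusion. $\pi_1^{qtop}(X,x_0)$ is $\pi_1(X,x_0)$ with the quotient topology induced from the compact-open topology on the space of loops at $x_0$. *)

theory Defs
  imports "HOL-Analysis.Analysis" "HOL-Algebra.Group"
begin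

text \<open>Concatenation (first alpha, then beta)
and reversal, as in the library's joinpaths/reversepath, but for arbitrary carrier types.\<close>

definition path_join :: "(real \<Rightarrow> 'a) \<Rightarrow> (real \<Rightarrow> 'a) \<Rightarrow> real \<Rightarrow> 'a"  (infixr \<open>\<star>\<close> 75)
  where "g1 \<star> g2 = (\<lambda>x. if x \<le> 1/2 then g1 (2 * x) else g2 (2 * x - 1))"

definition path_rev :: "(real \<Rightarrow> 'a) \<Rightarrow> real \<Rightarrow> 'a"
  where "path_rev g = (\<lambda>x. g (1 - x))"

definition path_homotopic :: "'a topology \<Rightarrow> (real \<Rightarrow> 'a) \<Rightarrow> (real \<Rightarrow> 'a) \<Rightarrow> bool"
  where "path_homotopic X p q \<longleftrightarrow>
     homotopic_with (\<lambda>r. r 0 = p 0 \<and> r 1 = p 1) (top_of_set {0..1::real}) X p q"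

definition path_class :: "'a topology \<Rightarrow> (real \<Rightarrow> 'a) \<Rightarrow> (real \<Rightarrow> 'a) set"
  where "path_class X p = {q. path_homotopic X p q}"

definition loops :: "'a topology \<Rightarrow> 'a \<Rightarrow> (real \<Rightarrow> 'a) set"
  where "loops X x0 = {g. pathin X g \<and> g 0 = x0 \<and> g 1 = x0}"

definition pi1 :: "'a topology \<Rightarrow> 'a \<Rightarrow> (real \<Rightarrow> 'a) set set"
  where "pi1 X x0 = path_class X ` loops X x0"

definition fundamental_group :: "'a topology \<Rightarrow> 'a \<Rightarrow> (real \<Rightarrow> 'a) set monoid"
  where "fundamental_group X x0 =
    \<lparr> carrier = pi1 X x0,
      mult = (\<lambda>A B. path_class X ((SOME a. a \<in> A) \<star> (SOME b. b \<in> B))),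
      one = path_class X (\<lambda>_. x0) \<rparr>"

definition compact_open_loops :: "'a topology \<Rightarrow> 'a \<Rightarrow> (real \<Rightarrow> 'a) topology"
  where "compact_open_loops X x0 = topology_generated_by
     {{g \<in> loops X x0. g ` K \<subseteq> U} | K U. compact K \<and> K \<subseteq> {0..1} \<and> openin X U}"

definition pi1_qtop :: "'a topology \<Rightarrow> 'a \<Rightarrow> (real \<Rightarrow> 'a) set topology"
  where "pi1_qtop X x0 = topology
     (\<lambda>A. A \<subseteq> pi1 X x0 \<and> openin (compact_open_loops X x0) {g \<in> loops X x0. path_class X g \<in> A})"

definition semilocally_path_H_connected :: "'a topology \<Rightarrow> 'a \<Rightarrow> (real \<Rightarrow> 'a) set set \<Rightarrow> bool"
  where "semilocally_path_H_connected X x0 H \<longleftrightarrow>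
    (\<forall>\<alpha>. pathin X \<alpha> \<and> \<alpha> 0 = x0 \<longrightarrow>
      (\<exists>U. openin X U \<and> \<alpha> 1 \<in> U \<and>
        (\<forall>\<gamma>. pathin (subtopology X U) \<gamma> \<and> \<gamma> 0 = \<alpha> 1 \<and> \<gamma> 1 = \<alpha> 1 \<longrightarrow>
          (\<exists>\<delta>\<in>loops X x0. path_class X \<delta> \<in> H \<and>
             path_class X \<gamma> = path_class X (path_rev \<alpha> \<star> (\<delta> \<star> \<alpha>))))))"

end

theory Submission
  imports Defs
begin

text \<open>
  If \<open>H\<close> is open in \<open>\<pi>\<^sub>1\<^sup>qtop\<close>, its preimage in the loop space is an open set containing
  \<open>\<alpha> \<star> c \<star> \<alpha>\<^sup>-\<^sup>1\<close> for the constant loop \<open>c\<close> at \<open>\<alpha>(1)\<close>; a subbasic compact-open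
  neighbourhood of that loop still contains \<open>\<alpha> \<star> \<gamma> \<star> \<alpha>\<^sup>-\<^sup>1\<close> for every loop \<open>\<gamma>\<close>
  in a small enough neighbourhood of \<open>\<alpha>(1)\<close>, which is semilocal path \<open>H\<close>-connectedness.

  Conversely, fix a loop \<open>f\<close> with \<open>[f] \<in> H\<close>. By continuity induction along \<open>[0,1]\<close>,
  every \<open>t\<close> admits a compact-open neighbourhood \<open>N\<close> of \<open>f\<close> and an open \<open>W \<ni> f(t)\<close>
  such that for every \<open>g \<in> N\<close> and every path \<open>\<beta>\<close> in \<open>W\<close> from \<open>g(t)\<close> to \<open>f(t)\<close>
  the loop \<open>g|\<^sub>[\<^sub>0\<^sub>,\<^sub>t\<^sub>] \<star> \<beta> \<star> (f|\<^sub>[\<^sub>0\<^sub>,\<^sub>t\<^sub>])\<^sup>-\<^sup>1\<close> represents an element of \<open>H\<close>.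
  The step from \<open>s\<close> to a nearby \<open>s'\<close> uses a neighbourhood \<open>U\<close> of \<open>f(t)\<close> given by
  semilocal \<open>H\<close>-connectedness and local path connectedness of \<open>W \<inter> U\<close>. At \<open>t = 1\<close>
  the statement says that \<open>N\<close> lies in the preimage of \<open>H\<close>.
\<close>

definition path_segment :: "real \<Rightarrow> real \<Rightarrow> (real \<Rightarrow> 'a) \<Rightarrow> real \<Rightarrow> 'a"
  where "path_segment a b g = (\<lambda>x. g ((b - a) * x + a))"

lemma affine_param_between:
  fixes a b x :: real
  assumes "x \<in> {0..1}"
  shows "(b - a) * x + a \<in> {min a b..max a b}"
proof (cases "a \<le> b")
  case True
  then have "0 \<le> (b - a) * x" "(b - a) * x \<le> b - a"
    using assms by (auto intro: mult_left_le)
  with True show ?thesis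
    by auto
next
  case False
  then have "0 \<le> (a - b) * x" "(a - b) * x \<le> a - b"
    using assms by (auto intro: mult_left_le)
  with False show ?thesis
    by (auto simp: algebra_simps)
qed

lemma convex_combination_in_unit_interval:
  fixes a b s :: real
  assumes "a \<in> {0..1}" "b \<in> {0..1}" "s \<in> {0..1}"
  shows "(1 - s) * a + s * b \<in> {0..1}"
  using affine_param_between[OF assms(3), of a b] assms(1,2)
  by (auto simp: algebra_simps)

lemma continuous_map_path_reparametrize:
  assumes "pathin X p" "continuous_on S h" "h \<in> S \<rightarrow> {0..1}"
  shows "continuous_map (top_of_set S) X (p \<circ> h)"
  using assms unfolding pathin_def
  by (metis continuous_map_compose continuous_map_subtopology_eu)

lemma pathin_reparametrize:
  assumes "pathin X p" "continuous_on {0..1} h" "h \<in> {0..1} \<rightarrow> {0..1}"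
  shows "pathin X (p \<circ> h)"
  using continuous_map_path_reparametrize[OF assms] by (simp add: pathin_def)

lemma pathin_path_rev [simp]: "pathin X p \<Longrightarrow> pathin X (path_rev p)"
  using pathin_reparametrize[of X p "\<lambda>x. 1 - x"] continuous_on_op_minus
  by (auto simp: o_def path_rev_def)

lemma pathin_path_segment [simp]:
  assumes "pathin X p" "a \<in> {0..1}" "b \<in> {0..1}"
  shows "pathin X (path_segment a b p)"
proof -
  have "(\<lambda>x. (b - a) * x + a) \<in> {0..1} \<rightarrow> {0..1}"
    using convex_combination_in_unit_interval[OF assms(2,3)] by (auto simp: algebra_simps)
  then show ?thesis
    using pathin_reparametrize[OF assms(1), of "\<lambda>x. (b - a) * x + a"]
    by (simp add: path_segment_def o_def continuous_intros)
qed

lemma pathin_subtopology_path_segment: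
  assumes "pathin X p" "a \<in> {0..1}" "b \<in> {0..1}" "\<And>r. r \<in> {min a b..max a b} \<Longrightarrow> p r \<in> U"
  shows "pathin (subtopology X U) (path_segment a b p)"
  using assms(4) pathin_path_segment[OF assms(1-3)] affine_param_between
  by (auto simp: pathin_subtopology path_segment_def)

lemma path_join_0 [simp]: "(p \<star> q) 0 = p 0"
  and path_join_1 [simp]: "(p \<star> q) 1 = q 1"
  by (simp_all add: path_join_def)

lemma path_rev_0 [simp]: "path_rev p 0 = p 1"
  and path_rev_1 [simp]: "path_rev p 1 = p 0"
  and path_rev_path_rev [simp]: "path_rev (path_rev p) = p"
  and path_rev_const [simp]: "path_rev (\<lambda>x. a) = (\<lambda>x. a)"
  by (simp_all add: path_rev_def)

lemma path_segment_0 [simp]: "path_segment a b p 0 = p a"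
  and path_segment_1 [simp]: "path_segment a b p 1 = p b"
  and path_segment_trivial [simp]: "path_segment a a p = (\<lambda>x. p a)"
  and path_segment_full [simp]: "path_segment 0 1 p = p"
  and path_rev_path_segment [simp]: "path_rev (path_segment a b p) = path_segment b a p"
  by (auto simp: path_segment_def path_rev_def algebra_simps)

lemma path_homotopicD:
  assumes "path_homotopic X p q"
  shows "pathin X p" "pathin X q" "q 0 = p 0" "q 1 = p 1"
proof -
  have h: "homotopic_with (\<lambda>r. r 0 = p 0 \<and> r 1 = p 1) (top_of_set {0..1}) X p q"
    using assms by (simp add: path_homotopic_def)
  show "pathin X p" "pathin X q"
    using homotopic_with_imp_continuous_maps[OF h] by (auto simp: pathin_def)
  show "q 0 = p 0" "q 1 = p 1"
    using homotopic_with_imp_property[OF h] by auto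
qed

lemma path_homotopic_refl: "pathin X p \<Longrightarrow> path_homotopic X p p"
  by (simp add: path_homotopic_def pathin_def)

lemma path_homotopic_sym: "path_homotopic X p q \<Longrightarrow> path_homotopic X q p"
  using path_homotopicD(3,4)[of X p q]
  by (simp add: path_homotopic_def homotopic_with_sym)

lemma path_homotopic_trans:
  assumes "path_homotopic X p q" "path_homotopic X q r"
  shows "path_homotopic X p r"
proof -
  have "homotopic_with (\<lambda>r. r 0 = p 0 \<and> r 1 = p 1) (top_of_set {0..1}) X q r"
    using assms(2) unfolding path_homotopic_def path_homotopicD(3,4)[OF assms(1)] .
  with assms(1) show ?thesis
    unfolding path_homotopic_def by (rule homotopic_with_trans)
qed

lemma path_homotopic_eq_on_unit:
  assumes "path_homotopic X p q"
    and "\<And>x. x \<in> {0..1} \<Longrightarrow> p' x = p x" "\<And>x. x \<in> {0..1} \<Longrightarrow> q' x = q x"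
  shows "path_homotopic X p' q'"
proof -
  have ends: "p' 0 = p 0" "p' 1 = p 1"
    using assms(2) by auto
  show ?thesis
    using assms(1) unfolding path_homotopic_def ends
    by (rule homotopic_with_eq) (use assms(2,3) in auto)
qed

text \<open>Straight-line homotopy between the two parameter maps.\<close>

lemma path_homotopic_reparametrize:
  assumes p: "pathin X p"
    and h: "continuous_on {0..1} h" "h \<in> {0..1} \<rightarrow> {0..1}"
    and k: "continuous_on {0..1} k" "k \<in> {0..1} \<rightarrow> {0..1}"
    and ends: "h 0 = k 0" "h 1 = k 1"
    and q: "\<And>x. x \<in> {0..1} \<Longrightarrow> q x = p (h x)"
    and r: "\<And>x. x \<in> {0..1} \<Longrightarrow> r x = p (k x)"
  shows "path_homotopic X q r"
proof -
  define F where "F = (\<lambda>z::real \<times> real. (1 - fst z) * h (snd z) + fst z * k (snd z))"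
  have "continuous_on ({0..1} \<times> {0..1}) F"
    unfolding F_def
    by (intro continuous_intros continuous_on_compose2[OF h(1)] continuous_on_compose2[OF k(1)]) auto
  moreover have "F \<in> {0..1} \<times> {0..1} \<rightarrow> {0..1}"
    using h(2) k(2) convex_combination_in_unit_interval by (auto simp: F_def Pi_iff)
  ultimately have "continuous_map (top_of_set ({0..1} \<times> {0..1})) X (p \<circ> F)"
    by (rule continuous_map_path_reparametrize[OF p])
  moreover have "\<And>t. F (t, 0) = h 0" "\<And>t. F (t, 1) = h 1"
    using ends by (auto simp: F_def algebra_simps)
  ultimately have "path_homotopic X (p \<circ> h) (p \<circ> k)"
    unfolding path_homotopic_def homotopic_with_def
    by (intro exI[where x="p \<circ> F"]) (simp add: F_def)
  then show ?thesis
    by (rule path_homotopic_eq_on_unit) (use q r in auto)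
qed

lemma path_homotopic_join:
  assumes hp: "path_homotopic X p p'" and hq: "path_homotopic X q q'" and e: "p 1 = q 0"
  shows "path_homotopic X (p \<star> q) (p' \<star> q')"
proof -
  let ?S = "{0..1::real} \<times> {0..1::real}"
  obtain Hp where Hp: "continuous_map (top_of_set ?S) X Hp" "\<And>x. Hp (0, x) = p x" "\<And>x. Hp (1, x) = p' x"
      "\<And>t. t \<in> {0..1} \<Longrightarrow> Hp (t, 0) = p 0 \<and> Hp (t, 1) = p 1"
    using hp unfolding path_homotopic_def homotopic_with_def by auto
  obtain Hq where Hq: "continuous_map (top_of_set ?S) X Hq" "\<And>x. Hq (0, x) = q x" "\<And>x. Hq (1, x) = q' x"
      "\<And>t. t \<in> {0..1} \<Longrightarrow> Hq (t, 0) = q 0 \<and> Hq (t, 1) = q 1"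
    using hq unfolding path_homotopic_def homotopic_with_def by auto
  have piece: "continuous_map (subtopology (top_of_set ?S) {z \<in> topspace (top_of_set ?S). P (snd z)}) X (F \<circ> j)"
    if "continuous_map (top_of_set ?S) X F" "continuous_map (top_of_set {z \<in> ?S. P (snd z)}) (top_of_set ?S) j"
    for P F j
  proof -
    have "?S \<inter> {z \<in> topspace (top_of_set ?S). P (snd z)} = {z \<in> ?S. P (snd z)}"
      by auto
    then show ?thesis
      using continuous_map_compose[OF that(2,1)] by (simp only: subtopology_subtopology)
  qed
  let ?K = "\<lambda>z. if snd z \<le> 1/2 then (Hp \<circ> (\<lambda>z. (fst z, 2 * snd z))) z else (Hq \<circ> (\<lambda>z. (fst z, 2 * snd z - 1))) z"
  have "continuous_map (top_of_set ?S) X ?K"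
  proof (rule continuous_map_cases_le)
    show "continuous_map (top_of_set ?S) euclideanreal snd"
      by (simp add: continuous_on_snd)
    show "continuous_map (subtopology (top_of_set ?S) {z \<in> topspace (top_of_set ?S). snd z \<le> 1/2}) X
        (Hp \<circ> (\<lambda>z. (fst z, 2 * snd z)))"
      by (rule piece[OF Hp(1)]) (auto simp: continuous_map_subtopology_eu intro!: continuous_intros)
    show "continuous_map (subtopology (top_of_set ?S) {z \<in> topspace (top_of_set ?S). 1/2 \<le> snd z}) X
        (Hq \<circ> (\<lambda>z. (fst z, 2 * snd z - 1)))"
      by (rule piece[OF Hq(1)]) (auto simp: continuous_map_subtopology_eu intro!: continuous_intros)
    fix z
    assume "z \<in> topspace (top_of_set ?S)" "snd z = 1/2"
    then have "2 * snd z = 1" "2 * snd z - 1 = 0" "fst z \<in> {0..1}"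
      by auto
    then show "(Hp \<circ> (\<lambda>z. (fst z, 2 * snd z))) z = (Hq \<circ> (\<lambda>z. (fst z, 2 * snd z - 1))) z"
      using Hp(4) Hq(4) e by (simp only: o_def)
  qed simp
  then show ?thesis
    unfolding path_homotopic_def homotopic_with_def
    by (intro exI[where x="?K"]) (use Hp(2-4) Hq(2-4) in \<open>auto simp: path_join_def\<close>)
qed

lemma pathin_join [simp]:
  assumes "pathin X p" "pathin X q" "p 1 = q 0"
  shows "pathin X (p \<star> q)"
  using path_homotopicD(1)[OF path_homotopic_join[OF path_homotopic_refl path_homotopic_refl]] assms .

lemma path_homotopic_join_assoc:
  assumes "pathin X p" "pathin X q" "pathin X r" "p 1 = q 0" "q 1 = r 0"
  shows "path_homotopic X ((p \<star> q) \<star> r) (p \<star> (q \<star> r))"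
proof (rule path_homotopic_reparametrize[where p="p \<star> (q \<star> r)"
      and h="\<lambda>x. min (2*x) (min (x + 1/4) ((x + 1)/2))" and k="\<lambda>x. x"])
  show "continuous_on {0..1} (\<lambda>x::real. min (2*x) (min (x + 1/4) ((x + 1)/2)))"
    by (intro continuous_intros) auto
  show "((p \<star> q) \<star> r) x = (p \<star> (q \<star> r)) (min (2*x) (min (x + 1/4) ((x + 1)/2)))" for x :: real
  proof -
    consider "x \<le> 1/4" | "1/4 < x" "x \<le> 1/2" | "1/2 < x"
      by linarith
    then show ?thesis
    proof cases
      case 1
      then show ?thesis
        by (simp add: path_join_def min_def)
    next
      case 2
      then have "min (2*x) (min (x + 1/4) ((x + 1)/2)) = x + 1/4"
        by (simp add: min_def)
      moreover have "2 * (2 * x) - 1 = 2 * (2 * (x + 1/4) - 1)"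
        by (simp add: algebra_simps)
      ultimately show ?thesis
        using 2 by (simp add: path_join_def)
    next
      case 3
      then have "min (2*x) (min (x + 1/4) ((x + 1)/2)) = (x + 1)/2"
        by (simp add: min_def)
      with 3 show ?thesis
        by (simp add: path_join_def) (rule arg_cong[where f=r], simp add: field_simps)
    qed
  qed
  show "pathin X (p \<star> (q \<star> r))"
    using assms by simp
qed (auto simp: min_le_iff_disj path_join_def)

lemma path_homotopic_join_rev_right:
  assumes "pathin X p"
  shows "path_homotopic X (p \<star> path_rev p) (\<lambda>x. p 0)"
proof (rule path_homotopic_reparametrize[where h="\<lambda>x. min (2*x) (2 - 2*x)" and k="\<lambda>x. 0"])
  show "continuous_on {0..1} (\<lambda>x::real. min (2*x) (2 - 2*x))"
    by (intro continuous_intros)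
  show "(p \<star> path_rev p) x = p (min (2*x) (2 - 2*x))" for x
    by (auto simp: path_join_def path_rev_def min_def algebra_simps)
qed (auto simp: assms)

lemma path_homotopic_join_rev_left:
  assumes "pathin X p"
  shows "path_homotopic X (path_rev p \<star> p) (\<lambda>x. p 1)"
proof (rule path_homotopic_reparametrize[where h="\<lambda>x. max (1 - 2*x) (2*x - 1)" and k="\<lambda>x. 1"])
  show "continuous_on {0..1} (\<lambda>x::real. max (1 - 2*x) (2*x - 1))"
    by (intro continuous_intros)
  show "(path_rev p \<star> p) x = p (max (1 - 2*x) (2*x - 1))" for x
    by (auto simp: path_join_def path_rev_def max_def algebra_simps)
qed (auto simp: assms)

lemma path_homotopic_join_const_left:
  assumes "pathin X p"
  shows "path_homotopic X ((\<lambda>x. p 0) \<star> p) p"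
proof (rule path_homotopic_reparametrize[where h="\<lambda>x. max 0 (2*x - 1)" and k="\<lambda>x. x"])
  show "continuous_on {0..1} (\<lambda>x::real. max 0 (2*x - 1))"
    by (intro continuous_intros)
  show "((\<lambda>x. p 0) \<star> p) x = p (max 0 (2*x - 1))" for x
  proof (cases "x = 1/2")
    case True
    then show ?thesis
      unfolding True by (simp add: path_join_def)
  qed (auto simp: path_join_def max_def)
qed (auto simp: assms intro: continuous_intros)

lemma path_homotopic_join_const_right:
  assumes "pathin X p"
  shows "path_homotopic X (p \<star> (\<lambda>x. p 1)) p"
proof (rule path_homotopic_reparametrize[where h="\<lambda>x. min 1 (2*x)" and k="\<lambda>x. x"])
  show "continuous_on {0..1} (\<lambda>x::real. min 1 (2*x))"
    by (intro continuous_intros)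
  show "(p \<star> (\<lambda>x. p 1)) x = p (min 1 (2*x))" for x
  proof (cases "x = 1/2")
    case True
    then show ?thesis
      unfolding True by (simp add: path_join_def)
  qed (auto simp: path_join_def min_def)
qed (auto simp: assms intro: continuous_intros)

lemma path_homotopic_join_segments:
  assumes f: "pathin X f" and abc: "a \<in> {0..1}" "b \<in> {0..1}" "c \<in> {0..1}"
  shows "path_homotopic X (path_segment a b f \<star> path_segment b c f) (path_segment a c f)"
proof (rule path_homotopic_reparametrize[where p=f
      and h="\<lambda>x. a + (b - a) * min 1 (2*x) + (c - b) * max 0 (2*x - 1)" and k="\<lambda>x. a + (c - a) * x"])
  show "continuous_on {0..1} (\<lambda>x::real. a + (b - a) * min 1 (2*x) + (c - b) * max 0 (2*x - 1))"
    by (intro continuous_intros)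
  show "continuous_on {0..1} (\<lambda>x::real. a + (c - a) * x)"
    by (intro continuous_intros)
  show "(\<lambda>x. a + (b - a) * min 1 (2*x) + (c - b) * max 0 (2*x - 1)) \<in> {0..1} \<rightarrow> {0..1}"
  proof
    fix x :: real
    assume x: "x \<in> {0..1}"
    show "a + (b - a) * min 1 (2*x) + (c - b) * max 0 (2*x - 1) \<in> {0..1}"
    proof (cases "x \<le> 1/2")
      case True
      then have "a + (b - a) * min 1 (2*x) + (c - b) * max 0 (2*x - 1) = (1 - 2*x) * a + (2*x) * b"
        by (simp add: min_def max_def algebra_simps)
      then show ?thesis
        using convex_combination_in_unit_interval[OF abc(1,2), of "2*x"] x True by simp
    next
      case False
      then have "a + (b - a) * min 1 (2*x) + (c - b) * max 0 (2*x - 1) = (1 - (2*x - 1)) * b + (2*x - 1) * c"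
        by (simp add: min_def max_def algebra_simps)
      then show ?thesis
        using convex_combination_in_unit_interval[OF abc(2,3), of "2*x - 1"] x False by simp
    qed
  qed
  show "(\<lambda>x. a + (c - a) * x) \<in> {0..1} \<rightarrow> {0..1}"
    using convex_combination_in_unit_interval[OF abc(1,3)] by (simp add: algebra_simps)
  show "(path_segment a b f \<star> path_segment b c f) x
      = f (a + (b - a) * min 1 (2*x) + (c - b) * max 0 (2*x - 1))" for x
    by (auto simp: path_join_def path_segment_def min_def max_def algebra_simps)
  show "path_segment a c f x = f (a + (c - a) * x)" for x
    by (simp add: path_segment_def algebra_simps)
qed (use f in auto)

lemma mem_path_class: "q \<in> path_class X p \<longleftrightarrow> path_homotopic X p q"
  by (simp add: path_class_def)

lemma path_class_eq: "path_homotopic X p q \<Longrightarrow> path_class X p = path_class X q"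
  unfolding path_class_def using path_homotopic_sym path_homotopic_trans by blast

text \<open>The multiplication of \<open>fundamental_group\<close>, for classes of arbitrary paths. With the
  [simp] rules below, \<open>simp\<close> normalises products of classes of composable paths.\<close>

definition class_mult :: "'a topology \<Rightarrow> (real \<Rightarrow> 'a) set \<Rightarrow> (real \<Rightarrow> 'a) set \<Rightarrow> (real \<Rightarrow> 'a) set"
  where "class_mult X A B = path_class X ((SOME a. a \<in> A) \<star> (SOME b. b \<in> B))"

definition is_path_class :: "'a topology \<Rightarrow> (real \<Rightarrow> 'a) set \<Rightarrow> bool"
  where "is_path_class X A \<longleftrightarrow> (\<exists>p. pathin X p \<and> A = path_class X p)"

definition class_start :: "(real \<Rightarrow> 'a) set \<Rightarrow> 'a"
  where "class_start A = (SOME a. a \<in> A) 0"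

definition class_finish :: "(real \<Rightarrow> 'a) set \<Rightarrow> 'a"
  where "class_finish A = (SOME a. a \<in> A) 1"

lemma path_homotopic_some_path_class: "pathin X p \<Longrightarrow> path_homotopic X p (SOME q. q \<in> path_class X p)"
  by (metis mem_path_class path_homotopic_refl someI)

lemma class_start_path_class [simp]: "pathin X p \<Longrightarrow> class_start (path_class X p) = p 0"
  using path_homotopicD(3)[OF path_homotopic_some_path_class] by (simp add: class_start_def)

lemma class_finish_path_class [simp]: "pathin X p \<Longrightarrow> class_finish (path_class X p) = p 1"
  using path_homotopicD(4)[OF path_homotopic_some_path_class] by (simp add: class_finish_def)

lemma is_path_class_path_class [simp]: "pathin X p \<Longrightarrow> is_path_class X (path_class X p)"
  by (auto simp: is_path_class_def)

lemma path_class_join [simp]: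
  "pathin X p \<Longrightarrow> pathin X q \<Longrightarrow> p 1 = q 0 \<Longrightarrow>
   path_class X (p \<star> q) = class_mult X (path_class X p) (path_class X q)"
  unfolding class_mult_def by (intro path_class_eq path_homotopic_join path_homotopic_some_path_class)

lemma is_path_classE:
  assumes "is_path_class X A"
  obtains p where "pathin X p" "A = path_class X p"
  using assms by (auto simp: is_path_class_def)

lemma class_mult_props [simp]:
  assumes "is_path_class X A" "is_path_class X B" "class_finish A = class_start B"
  shows "is_path_class X (class_mult X A B)"
    and "class_start (class_mult X A B) = class_start A"
    and "class_finish (class_mult X A B) = class_finish B"
proof -
  obtain p q where "pathin X p" "A = path_class X p" "pathin X q" "B = path_class X q"
    using assms(1,2) by (meson is_path_classE)
  moreover have "p 1 = q 0"
    using assms(3) calculation by simp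
  ultimately show "is_path_class X (class_mult X A B)"
    and "class_start (class_mult X A B) = class_start A"
    and "class_finish (class_mult X A B) = class_finish B"
    by (metis path_class_join pathin_join is_path_class_path_class class_start_path_class
        class_finish_path_class path_join_0 path_join_1)+
qed

lemma class_mult_assoc [simp]:
  assumes "is_path_class X A" "is_path_class X B" "is_path_class X C"
    and "class_finish A = class_start B" "class_finish B = class_start C"
  shows "class_mult X (class_mult X A B) C = class_mult X A (class_mult X B C)"
proof -
  obtain p q r where pqr: "pathin X p" "pathin X q" "pathin X r"
    and classes: "A = path_class X p" "B = path_class X q" "C = path_class X r"
    using assms(1-3) by (meson is_path_classE)
  moreover have "p 1 = q 0" "q 1 = r 0"
    using assms(4,5) pqr classes by auto
  ultimately show ?thesis
    using path_class_eq[OF path_homotopic_join_assoc[of X p q r]] by simp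
qed

lemma class_mult_rev_right [simp]:
  "pathin X p \<Longrightarrow> class_mult X (path_class X p) (path_class X (path_rev p)) = path_class X (\<lambda>x. p 0)"
  by (metis path_class_join pathin_path_rev path_rev_0 path_class_eq path_homotopic_join_rev_right)

lemma class_mult_rev_left [simp]:
  "pathin X p \<Longrightarrow> class_mult X (path_class X (path_rev p)) (path_class X p) = path_class X (\<lambda>x. p 1)"
  by (metis path_class_join pathin_path_rev path_rev_1 path_class_eq path_homotopic_join_rev_left)

lemma class_mult_const_left [simp]:
  assumes "is_path_class X B" "class_start B = a"
  shows "class_mult X (path_class X (\<lambda>x. a)) B = B"
proof -
  obtain p where p: "pathin X p" "B = path_class X p"
    using assms(1) by (rule is_path_classE)
  then have "a = p 0" "a \<in> topspace X"
    using assms(2) path_start_in_topspace by auto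
  with p show ?thesis
    by (metis path_class_join pathin_const path_class_eq path_homotopic_join_const_left)
qed

lemma class_mult_const_right [simp]:
  assumes "is_path_class X A" "class_finish A = a"
  shows "class_mult X A (path_class X (\<lambda>x. a)) = A"
proof -
  obtain p where p: "pathin X p" "A = path_class X p"
    using assms(1) by (rule is_path_classE)
  then have "a = p 1" "a \<in> topspace X"
    using assms(2) path_finish_in_topspace by auto
  with p show ?thesis
    by (metis path_class_join pathin_const path_class_eq path_homotopic_join_const_right)
qed

lemma class_mult_rev_right_cancel [simp]:
  assumes "pathin X p" "is_path_class X B" "class_start B = p 0"
  shows "class_mult X (path_class X p) (class_mult X (path_class X (path_rev p)) B) = B"
  using assms class_mult_assoc[of X "path_class X p" "path_class X (path_rev p)" B]
  by (simp add: path_start_in_topspace)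

lemma class_mult_rev_left_cancel [simp]:
  assumes "pathin X p" "is_path_class X B" "class_start B = p 1"
  shows "class_mult X (path_class X (path_rev p)) (class_mult X (path_class X p) B) = B"
  using assms class_mult_assoc[of X "path_class X (path_rev p)" "path_class X p" B]
  by (simp add: path_finish_in_topspace)

lemma class_mult_segments [simp]:
  assumes "pathin X f" "a \<in> {0..1}" "b \<in> {0..1}" "c \<in> {0..1}"
  shows "class_mult X (path_class X (path_segment a b f)) (path_class X (path_segment b c f))
    = path_class X (path_segment a c f)"
  using assms path_class_eq[OF path_homotopic_join_segments[OF assms]]
  by (metis path_class_join pathin_path_segment path_segment_0 path_segment_1)

lemma class_mult_segments_assoc [simp]:
  assumes "pathin X f" "a \<in> {0..1}" "b \<in> {0..1}" "c \<in> {0..1}" "is_path_class X B"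
    and "class_start B = f c"
  shows "class_mult X (path_class X (path_segment a b f)) (class_mult X (path_class X (path_segment b c f)) B)
    = class_mult X (path_class X (path_segment a c f)) B"
  using assms class_mult_assoc[of X "path_class X (path_segment a b f)" "path_class X (path_segment b c f)" B]
  by simp

lemma subgroup_class_mult_closed:
  assumes "subgroup H (fundamental_group X x0)" "A \<in> H" "B \<in> H"
  shows "class_mult X A B \<in> H"
  using subgroup.m_closed[OF assms] by (simp add: fundamental_group_def class_mult_def)

lemma subgroup_path_class_const:
  assumes "subgroup H (fundamental_group X x0)"
  shows "path_class X (\<lambda>x. x0) \<in> H"
  using subgroup.one_closed[OF assms] by (simp add: fundamental_group_def)

lemma openin_pi1_qtop:
  "openin (pi1_qtop X x0) A \<longleftrightarrow>
     A \<subseteq> pi1 X x0 \<and> openin (compact_open_loops X x0) {g \<in> loops X x0. path_class X g \<in> A}"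
proof -
  have Int: "\<And>S T. {g \<in> loops X x0. path_class X g \<in> S \<inter> T}
      = {g \<in> loops X x0. path_class X g \<in> S} \<inter> {g \<in> loops X x0. path_class X g \<in> T}"
    and Union: "\<And>\<K>. {g \<in> loops X x0. path_class X g \<in> \<Union>\<K>}
      = (\<Union>S\<in>\<K>. {g \<in> loops X x0. path_class X g \<in> S})"
    by auto
  have "istopology (\<lambda>A. A \<subseteq> pi1 X x0 \<and>
          openin (compact_open_loops X x0) {g \<in> loops X x0. path_class X g \<in> A})"
    unfolding istopology_def Int Union by (auto intro!: openin_Int openin_Union)
  then show ?thesis
    unfolding pi1_qtop_def by simp
qed

lemma topspace_compact_open_loops: "topspace (compact_open_loops X x0) = loops X x0"
proof -
  have "loops X x0 = {g \<in> loops X x0. g ` {} \<subseteq> topspace X}"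
    by simp
  then have "loops X x0 \<in> {{g \<in> loops X x0. g ` K \<subseteq> U} | K U. compact K \<and> K \<subseteq> {0..1} \<and> openin X U}"
    by blast
  then show ?thesis
    unfolding compact_open_loops_def topology_generated_by_topspace by blast
qed

lemma openin_compact_open_loops_subbasic:
  "compact K \<Longrightarrow> K \<subseteq> {0..1} \<Longrightarrow> openin X U \<Longrightarrow>
   openin (compact_open_loops X x0) {g \<in> loops X x0. g ` K \<subseteq> U}"
  unfolding compact_open_loops_def by (rule topology_generated_by_Basis) blast

text \<open>The paper's condition \<open>i\<^sub>*\<pi>\<^sub>1(U,\<alpha>(1)) \<le> [\<alpha>\<^sup>-\<^sup>1H\<alpha>]\<close>.\<close>

definition loops_in_conjugate :: "'a topology \<Rightarrow> 'a \<Rightarrow> (real \<Rightarrow> 'a) set set \<Rightarrow> (real \<Rightarrow> 'a) \<Rightarrow> 'a set \<Rightarrow> bool"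
  where "loops_in_conjugate X x0 H \<alpha> U \<longleftrightarrow>
    (\<forall>\<gamma>. pathin (subtopology X U) \<gamma> \<and> \<gamma> 0 = \<alpha> 1 \<and> \<gamma> 1 = \<alpha> 1 \<longrightarrow>
      (\<exists>\<delta>\<in>loops X x0. path_class X \<delta> \<in> H \<and> path_class X \<gamma> = path_class X (path_rev \<alpha> \<star> (\<delta> \<star> \<alpha>))))"

lemma semilocally_path_H_connected_iff:
  "semilocally_path_H_connected X x0 H \<longleftrightarrow>
    (\<forall>\<alpha>. pathin X \<alpha> \<and> \<alpha> 0 = x0 \<longrightarrow> (\<exists>U. openin X U \<and> \<alpha> 1 \<in> U \<and> loops_in_conjugate X x0 H \<alpha> U))"
  by (simp add: semilocally_path_H_connected_def loops_in_conjugate_def)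

lemma subbasic_nbhd_conjugated_loops:
  assumes \<alpha>: "pathin X \<alpha>" and K: "K \<subseteq> {0..1}" and V: "openin X V"
    and image_K: "(\<alpha> \<star> ((\<lambda>x. \<alpha> 1) \<star> path_rev \<alpha>)) ` K \<subseteq> V"
  obtains U where "openin X U" "\<alpha> 1 \<in> U"
    "\<And>\<gamma>. pathin (subtopology X U) \<gamma> \<Longrightarrow> (\<alpha> \<star> (\<gamma> \<star> path_rev \<alpha>)) ` K \<subseteq> V"
proof -
  txt \<open>The constant middle third meets \<open>K\<close> only if \<open>\<alpha>(1) \<in> V\<close>; otherwise no constraint is needed.\<close>
  define U where "U = (if \<alpha> 1 \<in> V then V else topspace X)"
  have "openin X U" "\<alpha> 1 \<in> U"
    using V path_finish_in_topspace[OF \<alpha>] by (auto simp: U_def)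
  moreover have "(\<alpha> \<star> (\<gamma> \<star> path_rev \<alpha>)) ` K \<subseteq> V" if "pathin (subtopology X U) \<gamma>" for \<gamma>
  proof (rule image_subsetI)
    fix k
    assume k: "k \<in> K"
    then have fk: "(\<alpha> \<star> ((\<lambda>x. \<alpha> 1) \<star> path_rev \<alpha>)) k \<in> V"
      using image_K by auto
    have \<gamma>U: "\<And>x. x \<in> {0..1} \<Longrightarrow> \<gamma> x \<in> U"
      using that by (simp add: pathin_subtopology)
    consider "k \<le> 1/2" | "1/2 < k" "2 * k - 1 \<le> 1/2" | "1/2 < 2 * k - 1"
      by linarith
    then show "(\<alpha> \<star> (\<gamma> \<star> path_rev \<alpha>)) k \<in> V"
    proof cases
      case 2
      then have "U = V"
        using fk by (simp add: path_join_def U_def)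
      moreover have "2 * (2 * k - 1) \<in> {0..1}"
        using 2 K k by auto
      ultimately show ?thesis
        using \<gamma>U 2 by (simp add: path_join_def)
    qed (use fk in \<open>auto simp: path_join_def\<close>)
  qed
  ultimately show ?thesis
    using that by blast
qed

lemma compact_open_nbhd_conjugated_loops:
  assumes \<alpha>: "pathin X \<alpha>" "\<alpha> 0 = x0"
    and N: "openin (compact_open_loops X x0) N" "\<alpha> \<star> ((\<lambda>x. \<alpha> 1) \<star> path_rev \<alpha>) \<in> N"
  shows "\<exists>U. openin X U \<and> \<alpha> 1 \<in> U \<and>
     (\<forall>\<gamma>. pathin (subtopology X U) \<gamma> \<and> \<gamma> 0 = \<alpha> 1 \<and> \<gamma> 1 = \<alpha> 1 \<longrightarrow> \<alpha> \<star> (\<gamma> \<star> path_rev \<alpha>) \<in> N)"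
proof -
  have "generate_topology_on {{g \<in> loops X x0. g ` K \<subseteq> U} | K U. compact K \<and> K \<subseteq> {0..1} \<and> openin X U} N"
    using N(1) unfolding compact_open_loops_def openin_topology_generated_by_iff .
  then show ?thesis
    using N(2)
  proof induct
    case (Int N1 N2)
    then obtain U1 U2 where "openin X U1" "\<alpha> 1 \<in> U1" "openin X U2" "\<alpha> 1 \<in> U2"
      "\<forall>\<gamma>. pathin (subtopology X U1) \<gamma> \<and> \<gamma> 0 = \<alpha> 1 \<and> \<gamma> 1 = \<alpha> 1 \<longrightarrow> \<alpha> \<star> (\<gamma> \<star> path_rev \<alpha>) \<in> N1"
      "\<forall>\<gamma>. pathin (subtopology X U2) \<gamma> \<and> \<gamma> 0 = \<alpha> 1 \<and> \<gamma> 1 = \<alpha> 1 \<longrightarrow> \<alpha> \<star> (\<gamma> \<star> path_rev \<alpha>) \<in> N2"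
      by auto
    then show ?case
      by (intro exI[where x="U1 \<inter> U2"]) (auto simp: pathin_subtopology)
  next
    case (UN \<N>)
    from UN.prems obtain M where "M \<in> \<N>" "\<alpha> \<star> ((\<lambda>x. \<alpha> 1) \<star> path_rev \<alpha>) \<in> M"
      by (rule UnionE)
    with UN.hyps show ?case
      by (meson UnionI)
  next
    case (Basis B)
    then obtain K V where B: "B = {g \<in> loops X x0. g ` K \<subseteq> V}" and K: "K \<subseteq> {0..1}" and V: "openin X V"
      by blast
    then have "(\<alpha> \<star> ((\<lambda>x. \<alpha> 1) \<star> path_rev \<alpha>)) ` K \<subseteq> V"
      using Basis(2) by auto
    then obtain U where U: "openin X U" "\<alpha> 1 \<in> U"
      and image_K: "\<And>\<gamma>. pathin (subtopology X U) \<gamma> \<Longrightarrow> (\<alpha> \<star> (\<gamma> \<star> path_rev \<alpha>)) ` K \<subseteq> V"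
      using subbasic_nbhd_conjugated_loops[OF \<alpha>(1) K V] by blast
    have "\<alpha> \<star> (\<gamma> \<star> path_rev \<alpha>) \<in> B"
      if "pathin (subtopology X U) \<gamma> \<and> \<gamma> 0 = \<alpha> 1 \<and> \<gamma> 1 = \<alpha> 1" for \<gamma>
      using that image_K[of \<gamma>] \<alpha> by (simp add: B loops_def pathin_subtopology)
    with U show ?case
      by blast
  qed simp
qed

lemma openin_pi1_qtop_imp_semilocally_path_H_connected:
  assumes "subgroup H (fundamental_group X x0)" and "openin (pi1_qtop X x0) H"
  shows "semilocally_path_H_connected X x0 H"
  unfolding semilocally_path_H_connected_iff
proof (intro allI impI)
  fix \<alpha>
  assume "pathin X \<alpha> \<and> \<alpha> 0 = x0"
  then have \<alpha>: "pathin X \<alpha>" "\<alpha> 0 = x0" "\<alpha> 1 \<in> topspace X"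
    using path_finish_in_topspace by blast+
  let ?P = "{g \<in> loops X x0. path_class X g \<in> H}"
  have "openin (compact_open_loops X x0) ?P"
    using assms(2) by (simp add: openin_pi1_qtop)
  moreover have "\<alpha> \<star> ((\<lambda>x. \<alpha> 1) \<star> path_rev \<alpha>) \<in> loops X x0"
    and "path_class X (\<alpha> \<star> ((\<lambda>x. \<alpha> 1) \<star> path_rev \<alpha>)) = path_class X (\<lambda>x. x0)"
    using \<alpha> by (simp_all add: loops_def)
  then have "\<alpha> \<star> ((\<lambda>x. \<alpha> 1) \<star> path_rev \<alpha>) \<in> ?P"
    using subgroup_path_class_const[OF assms(1)] by simp
  ultimately have "\<exists>U. openin X U \<and> \<alpha> 1 \<in> U \<and>
      (\<forall>\<gamma>. pathin (subtopology X U) \<gamma> \<and> \<gamma> 0 = \<alpha> 1 \<and> \<gamma> 1 = \<alpha> 1 \<longrightarrow> \<alpha> \<star> (\<gamma> \<star> path_rev \<alpha>) \<in> ?P)"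
    by (rule compact_open_nbhd_conjugated_loops[OF \<alpha>(1,2)])
  then obtain U where U: "openin X U" "\<alpha> 1 \<in> U"
    and conj_in_P: "\<forall>\<gamma>. pathin (subtopology X U) \<gamma> \<and> \<gamma> 0 = \<alpha> 1 \<and> \<gamma> 1 = \<alpha> 1 \<longrightarrow>
      \<alpha> \<star> (\<gamma> \<star> path_rev \<alpha>) \<in> ?P"
    by blast
  have "loops_in_conjugate X x0 H \<alpha> U"
    unfolding loops_in_conjugate_def
  proof (intro allI impI)
    fix \<gamma>
    assume \<gamma>: "pathin (subtopology X U) \<gamma> \<and> \<gamma> 0 = \<alpha> 1 \<and> \<gamma> 1 = \<alpha> 1"
    then have "pathin X \<gamma>"
      by (simp add: pathin_subtopology)
    then have "path_class X \<gamma> = path_class X (path_rev \<alpha> \<star> ((\<alpha> \<star> (\<gamma> \<star> path_rev \<alpha>)) \<star> \<alpha>))"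
      using \<gamma> \<alpha> by simp
    with conj_in_P \<gamma> show "\<exists>\<delta>\<in>loops X x0. path_class X \<delta> \<in> H \<and>
        path_class X \<gamma> = path_class X (path_rev \<alpha> \<star> (\<delta> \<star> \<alpha>))"
      by blast
  qed
  with U show "\<exists>U. openin X U \<and> \<alpha> 1 \<in> U \<and> loops_in_conjugate X x0 H \<alpha> U"
    by blast
qed

definition H_close_upto :: "'a topology \<Rightarrow> 'a \<Rightarrow> (real \<Rightarrow> 'a) set set \<Rightarrow> (real \<Rightarrow> 'a) \<Rightarrow> real \<Rightarrow> bool"
  where "H_close_upto X x0 H f t \<longleftrightarrow>
    (\<exists>N W. openin (compact_open_loops X x0) N \<and> f \<in> N \<and> openin X W \<and> f t \<in> W \<and>
      (\<forall>g\<in>N. g t \<in> W \<and> (\<forall>\<beta>. pathin (subtopology X W) \<beta> \<and> \<beta> 0 = g t \<and> \<beta> 1 = f t \<longrightarrow>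
        path_class X ((path_segment 0 t g \<star> \<beta>) \<star> path_rev (path_segment 0 t f)) \<in> H)))"

context
  fixes X :: "'a topology" and x0 :: 'a and H and f
  assumes lpc: "locally_path_connected_space X" and x0: "x0 \<in> topspace X"
    and sg: "subgroup H (fundamental_group X x0)" and SL: "semilocally_path_H_connected X x0 H"
    and f: "f \<in> loops X x0" "path_class X f \<in> H"
begin

lemma f_loop: "pathin X f" "f 0 = x0" "f 1 = x0"
  using f by (auto simp: loops_def)

lemma conjugated_small_loop_in_H:
  assumes t: "t \<in> {0..1}" and s: "s \<in> {0..1}"
    and U: "loops_in_conjugate X x0 H (path_segment 0 t f) U"
    and segment: "pathin (subtopology X U) (path_segment t s f)"
    and L: "pathin (subtopology X U) L" "L 0 = f s" "L 1 = f s"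
  shows "path_class X ((path_segment 0 s f \<star> L) \<star> path_rev (path_segment 0 s f)) \<in> H"
proof -
  define \<gamma> where "\<gamma> = path_segment t s f \<star> (L \<star> path_segment s t f)"
  have "pathin (subtopology X U) (path_segment s t f)"
    using pathin_path_rev[OF segment] by simp
  then have "pathin (subtopology X U) \<gamma>" "\<gamma> 0 = f t" "\<gamma> 1 = f t"
    using segment L by (simp_all add: \<gamma>_def)
  then obtain \<delta> where \<delta>: "\<delta> \<in> loops X x0" "path_class X \<delta> \<in> H"
    and \<gamma>_conj: "path_class X \<gamma> = path_class X (path_rev (path_segment 0 t f) \<star> (\<delta> \<star> path_segment 0 t f))"
    using U unfolding loops_in_conjugate_def by auto
  have "pathin X L" "pathin X \<delta>" "\<delta> 0 = x0" "\<delta> 1 = x0"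
    using L(1) \<delta>(1) by (auto simp: pathin_subtopology loops_def)
  then have "path_class X ((path_segment 0 s f \<star> L) \<star> path_rev (path_segment 0 s f))
    = class_mult X (path_class X (path_segment 0 t f))
        (class_mult X (path_class X \<gamma>) (path_class X (path_rev (path_segment 0 t f))))"
    and "class_mult X (path_class X (path_segment 0 t f))
        (class_mult X (path_class X (path_rev (path_segment 0 t f) \<star> (\<delta> \<star> path_segment 0 t f)))
          (path_class X (path_rev (path_segment 0 t f)))) = path_class X \<delta>"
    using f_loop t s L by (simp_all add: \<gamma>_def)
  with \<gamma>_conj \<delta>(2) show ?thesis
    by simp
qed

lemma conjugated_class_transport_in_H:
  assumes t: "t \<in> {0..1}" and s: "s \<in> {0..1}" and s': "s' \<in> {0..1}"
    and U: "loops_in_conjugate X x0 H (path_segment 0 t f) U"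
    and fU: "f ` {min t s..max t s} \<subseteq> U" "f ` {min s s'..max s s'} \<subseteq> U"
    and g: "pathin X g" "g 0 = x0" "g ` {min s s'..max s s'} \<subseteq> U"
    and \<beta>: "pathin (subtopology X U) \<beta>" "\<beta> 0 = g s" "\<beta> 1 = f s"
    and in_H: "path_class X ((path_segment 0 s g \<star> \<beta>) \<star> path_rev (path_segment 0 s f)) \<in> H"
    and \<beta>': "pathin (subtopology X U) \<beta>'" "\<beta>' 0 = g s'" "\<beta>' 1 = f s'"
  shows "path_class X ((path_segment 0 s' g \<star> \<beta>') \<star> path_rev (path_segment 0 s' f)) \<in> H"
proof -
  txt \<open>The new loop is the old one times the conjugate of the loop \<open>L\<close> at \<open>f(s)\<close>, which stays in \<open>U\<close>.\<close>
  define L where "L = ((path_rev \<beta> \<star> path_segment s s' g) \<star> \<beta>') \<star> path_segment s' s f"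
  have "pathin (subtopology X U) (path_segment s s' g)"
    using g s s' by (intro pathin_subtopology_path_segment) auto
  moreover have "pathin (subtopology X U) (path_segment s' s f)"
    and "pathin (subtopology X U) (path_segment t s f)"
    using f_loop(1) s s' t fU by (auto simp: min.commute max.commute intro!: pathin_subtopology_path_segment)
  ultimately have "path_class X ((path_segment 0 s f \<star> L) \<star> path_rev (path_segment 0 s f)) \<in> H"
    using \<beta> \<beta>' by (intro conjugated_small_loop_in_H[OF t s U]) (auto simp: L_def)
  moreover have "pathin X \<beta>" "pathin X \<beta>'"
    using \<beta> \<beta>' by (simp_all add: pathin_subtopology)
  then have "path_class X ((path_segment 0 s' g \<star> \<beta>') \<star> path_rev (path_segment 0 s' f))
    = class_mult X (path_class X ((path_segment 0 s g \<star> \<beta>) \<star> path_rev (path_segment 0 s f)))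
        (path_class X ((path_segment 0 s f \<star> L) \<star> path_rev (path_segment 0 s f)))"
    using f_loop g s s' \<beta> \<beta>' by (simp add: L_def)
  ultimately show ?thesis
    using subgroup_class_mult_closed[OF sg in_H] by simp
qed

lemma H_close_upto_step:
  assumes t: "t \<in> {0..1}" and s: "s \<in> {0..1}" and s': "s' \<in> {0..1}"
    and U: "openin X U" "loops_in_conjugate X x0 H (path_segment 0 t f) U"
    and fU: "f ` {min t s..max t s} \<subseteq> U" "f ` {min s s'..max s s'} \<subseteq> U"
    and R: "H_close_upto X x0 H f s"
  shows "H_close_upto X x0 H f s'"
proof -
  obtain N W where N: "openin (compact_open_loops X x0) N" "f \<in> N" and W: "openin X W" "f s \<in> W"
    and NW: "\<forall>g\<in>N. g s \<in> W \<and> (\<forall>\<beta>. pathin (subtopology X W) \<beta> \<and> \<beta> 0 = g s \<and> \<beta> 1 = f s \<longrightarrow>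
        path_class X ((path_segment 0 s g \<star> \<beta>) \<star> path_rev (path_segment 0 s f)) \<in> H)"
    using R unfolding H_close_upto_def by blast
  define C where "C = Collect (path_component_of (subtopology X (W \<inter> U)) (f s))"
  define K where "K = {min s s'..max s s'}"
  define N' where "N' = N \<inter> {g \<in> loops X x0. g ` {s} \<subseteq> C} \<inter> {g \<in> loops X x0. g ` K \<subseteq> U}"
  have "openin X (W \<inter> U)"
    using W U by auto
  then have "openin X C"
    unfolding C_def
    by (meson lpc openin_path_component_of_locally_path_connected_space openin_trans_full
        locally_path_connected_space_open_subset)
  then have "openin (compact_open_loops X x0) N'"
    unfolding N'_def K_def using s s' U(1)
    by (intro openin_Int N openin_compact_open_loops_subbasic) auto
  moreover have "f \<in> N'"
  proof -
    have "f s \<in> U"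
      using fU(1) by auto
    moreover have "f s \<in> topspace X"
      using path_image_subset_topspace[OF f_loop(1)] s by blast
    ultimately have "f s \<in> C"
      using W by (simp add: C_def path_component_of_refl)
    moreover have "f ` K \<subseteq> U"
      using fU(2) by (simp add: K_def)
    ultimately show ?thesis
      using N(2) f(1) by (simp add: N'_def)
  qed
  moreover have "f s' \<in> U"
    using fU(2) by auto
  moreover have "g s' \<in> U \<and> (\<forall>\<beta>'. pathin (subtopology X U) \<beta>' \<and> \<beta>' 0 = g s' \<and> \<beta>' 1 = f s' \<longrightarrow>
      path_class X ((path_segment 0 s' g \<star> \<beta>') \<star> path_rev (path_segment 0 s' f)) \<in> H)"
    if "g \<in> N'" for g
  proof (intro conjI allI impI)
    have g: "g \<in> N" "g s \<in> C" "g ` K \<subseteq> U" "pathin X g" "g 0 = x0"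
      using that by (auto simp: N'_def loops_def)
    show "g s' \<in> U"
      using g(3) by (auto simp: K_def)
    fix \<beta>'
    assume \<beta>': "pathin (subtopology X U) \<beta>' \<and> \<beta>' 0 = g s' \<and> \<beta>' 1 = f s'"
    obtain h where h: "pathin (subtopology X (W \<inter> U)) h" "h 0 = f s" "h 1 = g s"
      using g(2) unfolding C_def path_component_of_def by blast
    define \<beta> where "\<beta> = path_rev h"
    have "pathin (subtopology X (W \<inter> U)) \<beta>" "\<beta> 0 = g s" "\<beta> 1 = f s"
      using h by (simp_all add: \<beta>_def)
    then have \<beta>: "pathin (subtopology X W) \<beta>" "pathin (subtopology X U) \<beta>" "\<beta> 0 = g s" "\<beta> 1 = f s"
      by (auto simp: pathin_subtopology)
    have "path_class X ((path_segment 0 s g \<star> \<beta>) \<star> path_rev (path_segment 0 s f)) \<in> H"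
      using NW g(1) \<beta> by blast
    with \<beta> \<beta>' g(3,4,5) show "path_class X ((path_segment 0 s' g \<star> \<beta>') \<star> path_rev (path_segment 0 s' f)) \<in> H"
      by (intro conjugated_class_transport_in_H[OF t s s' U(2) fU]) (auto simp: K_def)
  qed
  ultimately show ?thesis
    unfolding H_close_upto_def using U(1) by blast
qed

lemma H_close_upto_locally_constant:
  assumes t: "t \<in> {0..1}"
  shows "\<exists>T. openin (top_of_set {0..1}) T \<and> t \<in> T \<and>
           (\<forall>s\<in>T. \<forall>s'\<in>T. H_close_upto X x0 H f s \<longrightarrow> H_close_upto X x0 H f s')"
proof -
  have "pathin X (path_segment 0 t f) \<and> path_segment 0 t f 0 = x0"
    using f_loop t by simp
  then have "\<exists>U. openin X U \<and> path_segment 0 t f 1 \<in> U \<and> loops_in_conjugate X x0 H (path_segment 0 t f) U"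
    using SL unfolding semilocally_path_H_connected_iff by blast
  then obtain U where U: "openin X U" "f t \<in> U" "loops_in_conjugate X x0 H (path_segment 0 t f) U"
    by auto
  have "openin (top_of_set {0..1}) {r \<in> {0..1::real}. f r \<in> U}"
    using openin_continuous_map_preimage[of "top_of_set {0..1}" X f U] f_loop(1) U(1)
    by (simp add: pathin_def)
  then obtain e where "e > 0" and fU: "\<And>r. r \<in> {0..1} \<Longrightarrow> dist r t < e \<Longrightarrow> f r \<in> U"
    unfolding openin_euclidean_subtopology_iff using t U(2) by blast
  have fU_between: "f ` {min a b..max a b} \<subseteq> U" if "a \<in> {0..1} \<inter> ball t e" "b \<in> {0..1} \<inter> ball t e" for a b
  proof (rule image_subsetI)
    fix r
    assume "r \<in> {min a b..max a b}"
    then have "r \<in> {0..1}" "dist r t < e"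
      using that by (auto simp: dist_real_def abs_less_iff)
    then show "f r \<in> U"
      by (rule fU)
  qed
  have t_near: "t \<in> {0..1} \<inter> ball t e"
    using t \<open>e > 0\<close> by simp
  show ?thesis
  proof (intro exI[where x="{0..1} \<inter> ball t e"] conjI ballI impI t_near)
    show "openin (top_of_set {0..1}) ({0..1} \<inter> ball t e)"
      by (simp add: openin_open_Int)
    fix s s'
    assume s: "s \<in> {0..1} \<inter> ball t e" and s': "s' \<in> {0..1} \<inter> ball t e"
      and "H_close_upto X x0 H f s"
    then show "H_close_upto X x0 H f s'"
      using H_close_upto_step[OF t _ _ U(1,3) fU_between[OF t_near s] fU_between[OF s s']] by blast
  qed
qed

lemma H_close_upto_0: "H_close_upto X x0 H f 0"
proof -
  have "pathin X (\<lambda>x. x0) \<and> (\<lambda>x::real. x0) 0 = x0"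
    using x0 by simp
  then obtain U where U: "openin X U" "x0 \<in> U" "loops_in_conjugate X x0 H (\<lambda>x. x0) U"
    using SL unfolding semilocally_path_H_connected_iff by blast
  have "path_class X \<beta> \<in> H" if \<beta>: "pathin (subtopology X U) \<beta>" "\<beta> 0 = x0" "\<beta> 1 = x0" for \<beta>
  proof -
    obtain \<delta> where \<delta>: "\<delta> \<in> loops X x0" "path_class X \<delta> \<in> H"
      and "path_class X \<beta> = path_class X (path_rev (\<lambda>x. x0) \<star> (\<delta> \<star> (\<lambda>x. x0)))"
      using U(3) \<beta> unfolding loops_in_conjugate_def by auto
    moreover have "pathin X \<delta>" "\<delta> 0 = x0" "\<delta> 1 = x0"
      using \<delta>(1) by (auto simp: loops_def)
    ultimately show ?thesis
      using x0 by simp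
  qed
  moreover have "path_class X ((path_segment 0 0 g \<star> \<beta>) \<star> path_rev (path_segment 0 0 f)) = path_class X \<beta>"
    if "pathin X \<beta>" "\<beta> 0 = x0" "\<beta> 1 = x0" "g 0 = x0" for g \<beta>
    using that x0 f_loop by simp
  moreover have "openin (compact_open_loops X x0) (loops X x0)"
    by (metis openin_topspace topspace_compact_open_loops)
  ultimately show ?thesis
    unfolding H_close_upto_def using U(1,2) f(1) f_loop(2)
    by (intro exI[where x="loops X x0"] exI[where x=U]) (auto simp: loops_def pathin_subtopology)
qed

lemma compact_open_nbhd_in_preimage:
  "\<exists>N. openin (compact_open_loops X x0) N \<and> f \<in> N \<and> N \<subseteq> {g \<in> loops X x0. path_class X g \<in> H}"
proof -
  have "H_close_upto X x0 H f 1"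
    by (rule connected_induction_simple[OF connected_Icc[of 0 "1::real"], where a=0])
       (use H_close_upto_0 H_close_upto_locally_constant in auto)
  then obtain N W where N: "openin (compact_open_loops X x0) N" "f \<in> N" and W: "f 1 \<in> W"
    and NW: "\<forall>g\<in>N. g 1 \<in> W \<and> (\<forall>\<beta>. pathin (subtopology X W) \<beta> \<and> \<beta> 0 = g 1 \<and> \<beta> 1 = f 1 \<longrightarrow>
        path_class X ((path_segment 0 1 g \<star> \<beta>) \<star> path_rev (path_segment 0 1 f)) \<in> H)"
    unfolding H_close_upto_def by blast
  have "g \<in> loops X x0 \<and> path_class X g \<in> H" if g: "g \<in> N" for g
  proof
    show "g \<in> loops X x0"
      using g openin_subset[OF N(1)] by (auto simp: topspace_compact_open_loops)
    then have g_loop: "pathin X g" "g 0 = x0" "g 1 = x0"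
      by (auto simp: loops_def)
    have "pathin (subtopology X W) (\<lambda>x. x0) \<and> (\<lambda>x::real. x0) 0 = g 1 \<and> (\<lambda>x::real. x0) 1 = f 1"
      using W x0 f_loop g_loop by (simp add: pathin_subtopology)
    with NW g have "path_class X ((g \<star> (\<lambda>x. x0)) \<star> path_rev f) \<in> H"
      unfolding path_segment_full by blast
    moreover have "class_mult X (path_class X ((g \<star> (\<lambda>x. x0)) \<star> path_rev f)) (path_class X f)
        = path_class X g"
      using g_loop f_loop x0 by simp
    ultimately show "path_class X g \<in> H"
      using subgroup_class_mult_closed[OF sg _ f(2)] by metis
  qed
  with N show ?thesis
    by blast
qed

end

lemma semilocally_path_H_connected_imp_openin_pi1_qtop:
  assumes "locally_path_connected_space X" "x0 \<in> topspace X"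
    and sg: "subgroup H (fundamental_group X x0)" and "semilocally_path_H_connected X x0 H"
  shows "openin (pi1_qtop X x0) H"
proof -
  have "H \<subseteq> pi1 X x0"
    using subgroup.subset[OF sg] by (simp add: fundamental_group_def)
  moreover have "openin (compact_open_loops X x0) {g \<in> loops X x0. path_class X g \<in> H}"
    using compact_open_nbhd_in_preimage[OF assms] by (subst openin_subopen) blast
  ultimately show ?thesis
    by (simp add: openin_pi1_qtop)
qed

theorem proposition4p3:
  fixes X :: "'a topology" and x0 :: 'a and H :: "(real \<Rightarrow> 'a) set set"
  assumes "connected_space X" and "locally_path_connected_space X"
    and "x0 \<in> topspace X"
    and "subgroup H (fundamental_group X x0)"
  shows "semilocally_path_H_connected X x0 H \<longleftrightarrow> openin (pi1_qtop X x0) H"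
  using semilocally_path_H_connected_imp_openin_pi1_qtop[OF assms(2-4)]
    openin_pi1_qtop_imp_semilocally_path_H_connected[OF assms(4)] by blast

end
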